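(* Let $I=(i_1,\ldots,i_m)$ and $J=(j_1,\ldots,j_m)$ with $i_k,j_k\in\{1,\ldots,n_k\}$. The basis tensor $\mathcal{E}^{IJ}(1)$ is $\mathbb{R}$-Hermitian decomposable if and only if $I-J$ has at most one nonzero entry. Moreover, if $I=J$ then $\operatorname{hrank}_{\mathbb{R}}\mathcal{E}^{IJ}(1)=1$, and if $I$ and $J$ differ in exactly one entry then $\operatorname{hrank}_{\mathbb{R}}\mathcal{E}^{IJ}(1)=2$.
   Context: For vectors $v_i$, $[v_1,\ldots,v_m]_{\otimes h}:=v_1\otimes\cdots\otimes v_m\otimes\overline{v_1}\otimes\cdots\otimes\overline{v_m}$. $\mathcal{E}^{IJ}(1)\in\mathbb{R}^{n_1\times\cdots\times n_m\times n_1\times\cdots\times n_m}$ is the tensor whose entries at positions $(i_1,\ldots,i_m,j_1,\ldots,j_m)$ and $(j_1,\ldots,j_m,i_1,\ldots,i_m)$ equal $1$ and all other entries are $0$. A real tensor $\mathcal{H}$ with $\mathcal{H}_{i_1\ldots i_mj_1\ldots j_m}=\mathcal{H}_{j_1\ldots j_mi_1\ldots i_m}$ is $\mathbb{R}$-Hermitian decomposable if $\mathcal{H}=\sum_{i=1}^r\lambda_i[u_i^1,\ldots,u_i^m]_{\otimes h}$ with $\lambda_i\in\mathbb{R}$ and $u_i^j\in\mathbb{R}^{n_j}$; the smallest such $r$ is $\operatorname{hrank}_{\mathbb{R}}(\mathcal{H})$. *)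

theory Defs
  imports Complex_Main
begin

text \<open>Dimensions: a list dims = [n_1,...,n_m] (so m = length dims).
  A multi-index I = (i_1,...,i_m) is a list with 1 <= i_k <= n_k (1-based, as in the paper).
  A real tensor of size n_1 x ... x n_m x n_1 x ... x n_m is a function
  nat list => nat list => real, H I J = H_{i_1..i_m j_1..j_m}; only valid indices matter.
  A vector u in R^{n_k} is a function nat => real (only entries 1..n_k matter).\<close>

definition valid_idx :: "nat list \<Rightarrow> nat list \<Rightarrow> bool" where
  "valid_idx dims I \<longleftrightarrow> length I = length dims \<and> (\<forall>k<length dims. 1 \<le> I ! k \<and> I ! k \<le> dims ! k)"

type_synonym rtensor = "nat list \<Rightarrow> nat list \<Rightarrow> real"

text \<open>[u^1,...,u^m]_{\<otimes>h} over the reals (conjugation is the identity).\<close>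
definition herm_outer :: "nat \<Rightarrow> (nat \<Rightarrow> nat \<Rightarrow> real) \<Rightarrow> rtensor" where
  "herm_outer m u = (\<lambda>I J. (\<Prod>k<m. u k (I ! k)) * (\<Prod>k<m. u k (J ! k)))"

definition basisE :: "nat list \<Rightarrow> nat list \<Rightarrow> rtensor" where
  "basisE I J = (\<lambda>K L. if (K = I \<and> L = J) \<or> (K = J \<and> L = I) then 1 else 0)"

definition herm_symmetric :: "nat list \<Rightarrow> rtensor \<Rightarrow> bool" where
  "herm_symmetric dims H \<longleftrightarrow> (\<forall>I J. valid_idx dims I \<and> valid_idx dims J \<longrightarrow> H I J = H J I)"

definition herm_decomp_len :: "nat list \<Rightarrow> rtensor \<Rightarrow> nat \<Rightarrow> bool" where
  "herm_decomp_len dims H r \<longleftrightarrow>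
     (\<exists>(lam :: nat \<Rightarrow> real) (u :: nat \<Rightarrow> nat \<Rightarrow> nat \<Rightarrow> real).
        \<forall>I J. valid_idx dims I \<and> valid_idx dims J \<longrightarrow>
          H I J = (\<Sum>i<r. lam i * herm_outer (length dims) (u i) I J))"

definition R_herm_decomposable :: "nat list \<Rightarrow> rtensor \<Rightarrow> bool" where
  "R_herm_decomposable dims H \<longleftrightarrow> herm_symmetric dims H \<and> (\<exists>r. herm_decomp_len dims H r)"

definition hrank_R :: "nat list \<Rightarrow> rtensor \<Rightarrow> nat" where
  "hrank_R dims H = (LEAST r. herm_decomp_len dims H r)"

end

theory Submission
  imports Defs
begin

(* Each term of a Hermitian decomposition factors over the slots as a product of
   u_k(i_k) u_k(j_k), so a decomposable tensor is unchanged when the k-th entries of its row and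
   column multi-indices are exchanged. If I and J differ in two slots p and q, exchanging slot p
   moves the entry 1 at (I, J) to a position (I', J') with I' different from both I and J, where
   E^{IJ}(1) vanishes; so E^{IJ}(1) is not decomposable. Conversely E^{II}(1) is a single term,
   and if I and J differ only in slot p, polarization in that slot gives two terms. For the lower
   bound, a single term has entries c x_K x_L, so its 2x2 minors vanish, whereas
   E_{II} E_{JJ} - E_{IJ}^2 = -1 for I different from J. *)

lemma prod_of_bool:
  "finite A \<Longrightarrow> (\<Prod>x\<in>A. of_bool (P x) :: 'a :: comm_semiring_1) = of_bool (\<forall>x\<in>A. P x)"
  by (induction A rule: finite_induct) (simp_all add: of_bool_conj[symmetric])

lemma eq_list_update_iff:
  assumes "length K = length I" "p < length I"
  shows "K = I[p := b] \<longleftrightarrow> K[p := I ! p] = I \<and> K ! p = b"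
  using assms by (auto simp: list_eq_iff_nth_eq nth_list_update)

lemma valid_idx_update:
  "valid_idx dims K \<Longrightarrow> valid_idx dims L \<Longrightarrow> p < length dims \<Longrightarrow> valid_idx dims (K[p := L ! p])"
  by (simp add: valid_idx_def nth_list_update)

lemma herm_outer_eq_prod: "herm_outer m u K L = (\<Prod>k<m. u k (K ! k) * u k (L ! k))"
  by (simp add: herm_outer_def prod.distrib)

lemma herm_outer_swap_entry:
  assumes "p < m" "length K = m" "length L = m"
  shows "herm_outer m u (K[p := L ! p]) (L[p := K ! p]) = herm_outer m u K L"
  unfolding herm_outer_eq_prod
  by (rule prod.cong) (use assms in \<open>auto simp: nth_list_update mult.commute\<close>)

lemma herm_decomp_len_0_imp_zero:
  "herm_decomp_len dims H 0 \<Longrightarrow> valid_idx dims K \<Longrightarrow> valid_idx dims L \<Longrightarrow> H K L = 0"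
  by (simp add: herm_decomp_len_def)

lemma herm_decomp_len_1_minor:
  assumes "herm_decomp_len dims H 1" "valid_idx dims K" "valid_idx dims L"
  shows "H K L * H K L = H K K * H L L"
proof -
  from assms(1) obtain c u where "\<And>K L. valid_idx dims K \<Longrightarrow> valid_idx dims L \<Longrightarrow>
      H K L = c * herm_outer (length dims) u K L"
    unfolding herm_decomp_len_def by auto
  with assms(2,3) show ?thesis
    by (simp add: herm_outer_def algebra_simps)
qed

lemma herm_decomp_len_swap_entry:
  assumes "herm_decomp_len dims H r" "valid_idx dims K" "valid_idx dims L" "p < length dims"
  shows "H (K[p := L ! p]) (L[p := K ! p]) = H K L"
proof -
  from assms(1) obtain lam u where H: "\<And>K L. valid_idx dims K \<Longrightarrow> valid_idx dims L \<Longrightarrow>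
      H K L = (\<Sum>i<r. lam i * herm_outer (length dims) (u i) K L)"
    unfolding herm_decomp_len_def by auto
  have "length K = length dims" "length L = length dims"
    using assms(2,3) by (auto simp: valid_idx_def)
  with assms(2-4) show ?thesis
    by (simp add: H valid_idx_update herm_outer_swap_entry)
qed

lemma basisE_not_herm_decomp_len_card_diff_ge2:
  assumes "valid_idx dims I" "valid_idx dims J" "2 \<le> card {k. k < length dims \<and> I ! k \<noteq> J ! k}"
  shows "\<not> herm_decomp_len dims (basisE I J) r"
proof
  obtain p q where pq: "p < length dims" "q < length dims" "p \<noteq> q" "I ! p \<noteq> J ! p" "I ! q \<noteq> J ! q"
    using assms(3) by (auto simp: card_le_Suc_iff numeral_2_eq_2)
  assume "herm_decomp_len dims (basisE I J) r"
  then have "basisE I J (I[p := J ! p]) (J[p := I ! p]) = basisE I J I J"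
    using assms(1,2) pq(1) by (rule herm_decomp_len_swap_entry)
  moreover have "I[p := J ! p] \<noteq> I" "I[p := J ! p] \<noteq> J"
  proof -
    have "I[p := J ! p] ! p = J ! p" "I[p := J ! p] ! q = I ! q"
      using assms(1) pq(1,3) by (simp_all add: valid_idx_def)
    with pq(4,5) show "I[p := J ! p] \<noteq> I" "I[p := J ! p] \<noteq> J"
      by metis+
  qed
  ultimately show False
    by (simp add: basisE_def)
qed

lemma basisE_not_herm_decomp_len_0:
  assumes "valid_idx dims I" "valid_idx dims J"
  shows "\<not> herm_decomp_len dims (basisE I J) 0"
  using herm_decomp_len_0_imp_zero[of dims "basisE I J" I J] assms by (auto simp: basisE_def)

lemma basisE_not_herm_decomp_len_1:
  assumes "valid_idx dims I" "valid_idx dims J" "I \<noteq> J"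
  shows "\<not> herm_decomp_len dims (basisE I J) 1"
  using herm_decomp_len_1_minor[of dims "basisE I J" I J] assms by (auto simp: basisE_def)

definition unit_vec :: "nat \<Rightarrow> nat \<Rightarrow> real" where
  "unit_vec a x = of_bool (x = a)"

lemma herm_outer_unit_vecs:
  assumes "length K = m" "length L = m" "length I = m"
  shows "herm_outer m (\<lambda>k. unit_vec (I ! k)) K L = of_bool (K = I \<and> L = I)"
proof -
  have "(\<Prod>k<m. unit_vec (I ! k) (X ! k)) = of_bool (X = I)" if "length X = m" for X
    using that assms(3) by (auto simp: unit_vec_def prod_of_bool list_eq_iff_nth_eq)
  with assms(1,2) show ?thesis
    by (simp add: herm_outer_def of_bool_conj)
qed

lemma herm_outer_unit_vecs_update:
  assumes "length K = m" "length L = m" "length I = m" "p < m"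
  shows "herm_outer m ((\<lambda>k. unit_vec (I ! k))(p := w)) K L
           = w (K ! p) * w (L ! p) * of_bool (K[p := I ! p] = I \<and> L[p := I ! p] = I)"
proof -
  have "herm_outer m ((\<lambda>k. unit_vec (I ! k))(p := w)) K L
      = w (K ! p) * w (L ! p) * (\<Prod>k\<in>{..<m} - {p}. of_bool (K ! k = I ! k \<and> L ! k = I ! k))"
    unfolding herm_outer_eq_prod using assms(4)
    by (simp add: prod.remove[of _ p] unit_vec_def of_bool_conj)
  also have "(\<Prod>k\<in>{..<m} - {p}. of_bool (K ! k = I ! k \<and> L ! k = I ! k) :: real)
      = of_bool (K[p := I ! p] = I \<and> L[p := I ! p] = I)"
    using assms by (auto simp: prod_of_bool list_eq_iff_nth_eq nth_list_update)
  finally show ?thesis .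
qed

lemma herm_decomp_len_basisE_diag:
  assumes "valid_idx dims I"
  shows "herm_decomp_len dims (basisE I I) 1"
  unfolding herm_decomp_len_def
proof (intro exI[of _ "\<lambda>_. 1"] exI[of _ "\<lambda>_ k. unit_vec (I ! k)"] allI impI)
  fix K L assume "valid_idx dims K \<and> valid_idx dims L"
  with assms have "length K = length I" "length L = length I" "length I = length dims"
    by (auto simp: valid_idx_def)
  then show "basisE I I K L = (\<Sum>i::nat<1. 1 * herm_outer (length dims) (\<lambda>k. unit_vec (I ! k)) K L)"
    by (simp add: herm_outer_unit_vecs basisE_def)
qed

text \<open>With \<open>a = I ! p\<close>, polarization
  \<open>(e\<^sub>a + e\<^sub>b) \<otimes> (e\<^sub>a + e\<^sub>b) - (e\<^sub>a - e\<^sub>b) \<otimes> (e\<^sub>a - e\<^sub>b) = 2 (e\<^sub>a \<otimes> e\<^sub>b + e\<^sub>b \<otimes> e\<^sub>a)\<close>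
  in slot \<open>p\<close>, with \<open>e\<^bsub>I ! k\<^esub>\<close> in every other slot.\<close>

lemma herm_decomp_len_basisE_one_diff:
  assumes "valid_idx dims I" "p < length dims" "I ! p \<noteq> b"
  shows "herm_decomp_len dims (basisE I (I[p := b])) 2"
proof -
  define w :: "nat \<Rightarrow> nat \<Rightarrow> real"
    where "w i x = unit_vec (I ! p) x + (if i = 0 then 1 else -1) * unit_vec b x" for i x
  define lam :: "nat \<Rightarrow> real" where "lam i = (if i = 0 then 1/2 else -1/2)" for i
  define u where "u i = (\<lambda>k. unit_vec (I ! k))(p := w i)" for i
  show ?thesis
    unfolding herm_decomp_len_def
  proof (intro exI[of _ lam] exI[of _ u] allI impI)
    fix K L assume "valid_idx dims K \<and> valid_idx dims L"
    then have len: "length K = length I" "length L = length I" "length I = length dims"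
      using assms(1) by (auto simp: valid_idx_def)
    have "(\<Sum>i<2. lam i * herm_outer (length dims) (u i) K L)
        = of_bool (K[p := I ! p] = I \<and> L[p := I ! p] = I)
            * of_bool (K ! p = I ! p \<and> L ! p = b \<or> K ! p = b \<and> L ! p = I ! p)"
      using len assms(2,3)
      by (auto simp: numeral_2_eq_2 u_def herm_outer_unit_vecs_update lam_def w_def unit_vec_def)
    also have "\<dots> = of_bool (K = I \<and> L = I[p := b] \<or> K = I[p := b] \<and> L = I)"
    proof -
      have "X = I \<longleftrightarrow> X[p := I ! p] = I \<and> X ! p = I ! p"
        and "X = I[p := b] \<longleftrightarrow> X[p := I ! p] = I \<and> X ! p = b"
        if "length X = length I" for X
        using that len(3) assms(2) eq_list_update_iff[of X I p "I ! p"] eq_list_update_iff[of X I p b]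
        by simp_all
      note eqs = this[OF len(1)] this[OF len(2)]
      show ?thesis
        unfolding eqs of_bool_conj[symmetric] by (intro arg_cong[where f = of_bool]) blast
    qed
    also have "\<dots> = basisE I (I[p := b]) K L"
      by (simp add: basisE_def)
    finally show "basisE I (I[p := b]) K L = (\<Sum>i<2. lam i * herm_outer (length dims) (u i) K L)"
      by (rule sym)
  qed
qed

lemma herm_decomp_len_basisE_card_diff_1:
  assumes "valid_idx dims I" "valid_idx dims J" "card {k. k < length dims \<and> I ! k \<noteq> J ! k} = 1"
  shows "herm_decomp_len dims (basisE I J) 2"
proof -
  obtain p where p: "p < length dims" "I ! p \<noteq> J ! p"
    and agree: "\<forall>k<length dims. k \<noteq> p \<longrightarrow> I ! k = J ! k"
    using assms(3) by (auto simp: card_Suc_eq)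
  have "I[p := J ! p] = J"
    using assms(1,2) p(1) agree by (auto simp: valid_idx_def list_eq_iff_nth_eq nth_list_update)
  with herm_decomp_len_basisE_one_diff[OF assms(1) p] show ?thesis
    by simp
qed

lemma hrank_R_eqI:
  "herm_decomp_len dims H r \<Longrightarrow> (\<And>s. s < r \<Longrightarrow> \<not> herm_decomp_len dims H s) \<Longrightarrow> hrank_R dims H = r"
  unfolding hrank_R_def by (rule Least_equality) (auto simp: not_less[symmetric])

theorem corollary3p4:
  fixes dims I J :: "nat list"
  assumes "valid_idx dims I" and "valid_idx dims J"
  shows "(R_herm_decomposable dims (basisE I J)
            \<longleftrightarrow> card {k. k < length dims \<and> I ! k \<noteq> J ! k} \<le> 1)
       \<and> (I = J \<longrightarrow> hrank_R dims (basisE I J) = 1)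
       \<and> (card {k. k < length dims \<and> I ! k \<noteq> J ! k} = 1 \<longrightarrow> hrank_R dims (basisE I J) = 2)"
proof -
  define D where "D = {k. k < length dims \<and> I ! k \<noteq> J ! k}"
  have D_empty: "card D = 0 \<longleftrightarrow> I = J"
    using assms by (auto simp: D_def valid_idx_def list_eq_iff_nth_eq)
  have "herm_symmetric dims (basisE I J)"
    by (auto simp: herm_symmetric_def basisE_def)
  then have "R_herm_decomposable dims (basisE I J) \<longleftrightarrow> card D \<le> 1"
    using D_empty herm_decomp_len_basisE_diag[OF assms(1)]
      herm_decomp_len_basisE_card_diff_1[OF assms, folded D_def]
      basisE_not_herm_decomp_len_card_diff_ge2[OF assms, folded D_def]
    by (auto simp: R_herm_decomposable_def le_Suc_eq not_le)
  moreover have "hrank_R dims (basisE I I) = 1"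
    using herm_decomp_len_basisE_diag basisE_not_herm_decomp_len_0 assms(1)
    by (auto intro!: hrank_R_eqI)
  moreover have "hrank_R dims (basisE I J) = 2" if "card D = 1"
    using that D_empty herm_decomp_len_basisE_card_diff_1[OF assms, folded D_def]
      basisE_not_herm_decomp_len_0[OF assms] basisE_not_herm_decomp_len_1[OF assms]
    by (auto intro!: hrank_R_eqI simp: less_2_cases_iff)
  ultimately show ?thesis
    unfolding D_def by blast
qed

end
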